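(* Let $q$ be an odd prime, $n \geq 1$ an integer, and $v = q^n$. Let $k$ be an odd positive integer. Then there are no integers $a_1, \ldots, a_k$ with $1 \leq a_j < v$ for all $j$ such that $\prod_{j=1}^k a_j = \prod_{j=1}^k (v - a_j)$. *)

theory Defs
  imports Main "HOL-Computational_Algebra.Primes"
begin

end

theory Submission
  imports Defs "HOL-Number_Theory.Cong"
begin

text \<open>Write \<open>a_j = q^e_j * b_j\<close> with \<open>q\<close> not dividing \<open>b_j\<close>. Since \<open>a_j < q^n\<close> forces
  \<open>e_j < n\<close>, also \<open>v - a_j = q^e_j * c_j\<close> with \<open>c_j = q^(n - e_j) - b_j \<equiv> -b_j (mod q)\<close>.
  Cancelling the common power of \<open>q\<close> leaves \<open>\<Prod>b_j = \<Prod>c_j \<equiv> (-1)^k \<Prod>b_j = -\<Prod>b_j (mod q)\<close>,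
  so the odd prime \<open>q\<close> divides \<open>2 \<Prod>b_j\<close>, which is impossible.\<close>

lemma prime_power_complement_decomp:
  fixes p x :: int and n :: nat
  assumes "prime p" "0 < x" "x < p ^ n"
  obtains e b c where "x = p ^ e * b" "p ^ n - x = p ^ e * c" "\<not> p dvd b" "[c = - b] (mod p)"
proof -
  have p1: "p > 1" using assms(1) prime_gt_1_int by blast
  have "x \<noteq> 0" "\<not> is_unit p" using assms(1,2) by auto
  then obtain b where b: "x = p ^ multiplicity p x * b" "\<not> p dvd b"
    using multiplicity_decompose' by blast
  define e where "e = multiplicity p x"
  have "b > 0" using b(1) assms(2) p1 by (simp add: e_def[symmetric] zero_less_mult_iff)
  have "e < n"
  proof (rule ccontr)
    assume "\<not> e < n"
    hence "p ^ n \<le> p ^ e" using p1 by (simp add: power_increasing)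
    also have "\<dots> \<le> p ^ e * b" using \<open>b > 0\<close> p1 by simp
    also have "\<dots> = x" using b(1) by (simp add: e_def)
    finally show False using assms(3) by simp
  qed
  define c where "c = p ^ (n - e) - b"
  have "p ^ n = p ^ e * p ^ (n - e)" using \<open>e < n\<close> by (simp flip: power_add)
  hence "p ^ n - x = p ^ e * c" using b(1) by (simp add: c_def e_def algebra_simps)
  moreover have "[c = - b] (mod p)"
    using \<open>e < n\<close> by (simp add: c_def cong_iff_dvd_diff)
  ultimately show thesis using b by (intro that[of e b c]) (simp_all add: e_def)
qed

lemma prod_cong_neg_odd_card:
  fixes b c :: "'a \<Rightarrow> 'b :: unique_euclidean_ring"
  assumes "odd (card A)" "\<And>j. j \<in> A \<Longrightarrow> [c j = - b j] (mod p)"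
  shows "[(\<Prod>j\<in>A. c j) = - (\<Prod>j\<in>A. b j)] (mod p)"
proof -
  have "[(\<Prod>j\<in>A. c j) = (\<Prod>j\<in>A. - b j)] (mod p)"
    using assms(2) by (rule cong_prod)
  also have "(\<Prod>j\<in>A. - b j) = - (\<Prod>j\<in>A. b j)"
    using assms(1) by (simp add: prod_uminus)
  finally show ?thesis .
qed

lemma odd_prime_not_cong_neg:
  fixes p y :: int
  assumes "prime p" "odd p" "\<not> p dvd y"
  shows "\<not> [y = - y] (mod p)"
proof
  assume "[y = - y] (mod p)"
  hence "p dvd 2 * y" by (simp add: cong_iff_dvd_diff)
  moreover have "\<not> p dvd 2"
  proof
    assume "p dvd 2"
    hence "p \<le> 2" by (simp add: zdvd_imp_le)
    with prime_gt_1_int[OF assms(1)] have "p = 2" by simp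
    with assms(2) show False by simp
  qed
  ultimately show False using assms(1,3) prime_dvd_mult_iff by blast
qed

lemma odd_prime_power_prod_neq_prod_complement:
  fixes p :: int and a :: "'a \<Rightarrow> int"
  assumes p: "prime p" "odd p" and "odd (card A)"
    and a: "\<And>j. j \<in> A \<Longrightarrow> 0 < a j \<and> a j < p ^ n"
  shows "(\<Prod>j\<in>A. a j) \<noteq> (\<Prod>j\<in>A. p ^ n - a j)"
proof
  assume eq: "(\<Prod>j\<in>A. a j) = (\<Prod>j\<in>A. p ^ n - a j)"
  have "finite A" using assms(3) card.infinite by fastforce
  have "\<exists>e b c. a j = p ^ e * b \<and> p ^ n - a j = p ^ e * c \<and> \<not> p dvd b \<and> [c = - b] (mod p)"
    if "j \<in> A" for j
    using a[OF that] by (metis prime_power_complement_decomp[OF p(1)])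
  then obtain e b c where ebc: "\<And>j. j \<in> A \<Longrightarrow> a j = p ^ e j * b j \<and>
      p ^ n - a j = p ^ e j * c j \<and> \<not> p dvd b j \<and> [c j = - b j] (mod p)"
    by metis
  have "(\<Prod>j\<in>A. p ^ e j) * (\<Prod>j\<in>A. b j) = (\<Prod>j\<in>A. a j)"
    using ebc by (simp add: prod.distrib[symmetric])
  also have "\<dots> = (\<Prod>j\<in>A. p ^ n - a j)" by (rule eq)
  also have "\<dots> = (\<Prod>j\<in>A. p ^ e j * c j)"
    using ebc by (intro prod.cong) blast+
  also have "\<dots> = (\<Prod>j\<in>A. p ^ e j) * (\<Prod>j\<in>A. c j)"
    by (rule prod.distrib)
  finally have "(\<Prod>j\<in>A. c j) = (\<Prod>j\<in>A. b j)"
    using prime_gt_0_int[OF p(1)] \<open>finite A\<close> by simp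
  moreover have "[(\<Prod>j\<in>A. c j) = - (\<Prod>j\<in>A. b j)] (mod p)"
    using assms(3) ebc by (intro prod_cong_neg_odd_card) simp_all
  moreover have "\<not> p dvd (\<Prod>j\<in>A. b j)"
    using p(1) ebc \<open>finite A\<close> by (simp add: prime_dvd_prod_iff)
  ultimately show False using odd_prime_not_cong_neg[OF p] by simp
qed

theorem lemma4p10:
  fixes q n k :: nat and v :: int
  assumes "prime q" and "odd q" and "n \<ge> 1" and "v = int q ^ n"
    and "odd k" and "k \<ge> 1"
  shows "\<not> (\<exists>a :: nat \<Rightarrow> int.
            (\<forall>j\<in>{1..k}. 1 \<le> a j \<and> a j < v) \<and>
            (\<Prod>j=1..k. a j) = (\<Prod>j=1..k. v - a j))"
proof
  assume "\<exists>a :: nat \<Rightarrow> int. (\<forall>j\<in>{1..k}. 1 \<le> a j \<and> a j < v) \<and>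
            (\<Prod>j=1..k. a j) = (\<Prod>j=1..k. v - a j)"
  then obtain a :: "nat \<Rightarrow> int" where a: "\<forall>j\<in>{1..k}. 1 \<le> a j \<and> a j < v"
    and eq: "(\<Prod>j=1..k. a j) = (\<Prod>j=1..k. v - a j)" by blast
  have "prime (int q)" "odd (int q)" using assms(1,2) by simp_all
  moreover have "odd (card {1..k})" using assms(5) by simp
  moreover have "\<And>j. j \<in> {1..k} \<Longrightarrow> 0 < a j \<and> a j < int q ^ n"
    using a assms(4) by force
  ultimately show False
    using odd_prime_power_prod_neq_prod_complement eq assms(4) by metis
qed

end
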